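(* Let $m\ge3$ be odd and $n\ge2$. The set $\mathrm{SPSD}_{m,n}$ is a closed convex cone. Moreover, if $\mathcal{A},\mathcal{B}\in\mathrm{SPSD}_{3,n}$, then their Hadamard product $\mathcal{C}=\mathcal{A}\circ\mathcal{B}$ (entrywise product, $c_{ijk}=a_{ijk}b_{ijk}$) belongs to $\mathrm{SPSD}_{3,n}$; and if $\mathcal{A},\mathcal{B}\in\mathrm{SPD}_{3,n}$, then $\mathcal{C}\in\mathrm{SPD}_{3,n}$.
   Context: For a symmetric $m$th order $n$-dimensional real tensor $\mathcal{A}$ and $\mathbf{x}\in\mathbb{R}^n$, $\mathcal{A}\mathbf{x}^{m-1}$ is the vector with $i$th component $\sum_{i_2,\dots,i_m}a_{ii_2\dots i_m}x_{i_2}\cdots x_{i_m}$. For odd $m$, $\mathrm{SPSD}_{m,n}$ is the set of real symmetric $m$th order $n$-dimensional tensors $\mathcal{A}$ with $\mathcal{A}\mathbf{x}^{m-1}\ge\mathbf{0}$ componentwise for all $\mathbf{x}\in\mathbb{R}^n$ (strongly positive semi-definite tensors), and $\mathrm{SPD}_{m,n}$ is the set of those with $\mathcal{A}\mathbf{x}^{m-1}>\mathbf{0}$ componentwise for all nonzero $\mathbf{x}$ (strongly positive definite tensors). *)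

theory Defs
  imports "HOL-Analysis.Analysis"
begin

text \<open>A real tensor of order m and dimension n is represented as a vector indexed by
  index maps g :: 'n ^ ('m option): the n-element type 'n is the index range {1..n}
  and the positions are 'm option, i.e. CARD('m) + 1 = m positions. Position None is the
  first index i, positions Some p are the remaining m - 1 indices i_2 .. i_m.\<close>

type_synonym ('n, 'm) tensor = "real ^ ('n ^ ('m option))"

definition sym_tensor :: "('n::finite, 'm::finite) tensor \<Rightarrow> bool" where
  "sym_tensor A \<longleftrightarrow>
     (\<forall>\<sigma>. \<sigma> permutes (UNIV :: 'm option set) \<longrightarrow>
        (\<forall>g. A $ g = A $ (\<chi> p. g $ (\<sigma> p))))"

definition tensor_apply :: "('n::finite, 'm::finite) tensor \<Rightarrow> real ^ 'n \<Rightarrow> real ^ 'n" where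
  "tensor_apply A x = (\<chi> i. \<Sum>g \<in> {g. g $ None = i}. A $ g * (\<Prod>p\<in>UNIV. x $ (g $ Some p)))"

definition SPSD :: "('n::finite, 'm::finite) tensor set" where
  "SPSD = {A. sym_tensor A \<and> (\<forall>x i. tensor_apply A x $ i \<ge> 0)}"

definition SPD :: "('n::finite, 'm::finite) tensor set" where
  "SPD = {A. sym_tensor A \<and> (\<forall>x i. x \<noteq> 0 \<longrightarrow> tensor_apply A x $ i > 0)}"

definition hadamard :: "('n::finite, 'm::finite) tensor \<Rightarrow> ('n, 'm) tensor \<Rightarrow> ('n, 'm) tensor" where
  "hadamard A B = (\<chi> g. A $ g * B $ g)"

end

theory Submission
  imports Defs
begin

(*
  For order three, the i-th component of A x^2 is the quadratic form x^T A_i x of the slice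
  A_i = (a_ijk)_jk, and a symmetric tensor has symmetric slices. So A is strongly positive
  (semi)definite iff it is symmetric and all its slices are positive (semi)definite, and since
  the slices of a Hadamard product are the Hadamard products of the slices, the claim is the
  Schur product theorem. For that, peel off Schur complements to write B = sum of v v^T; then
  x^T (A o B) x = sum of (x o v)^T A (x o v). Closedness and the cone property hold for every
  order, as SPSD is cut out by closed conditions that are linear in A.
*)

definition quad_form :: "('n::finite \<Rightarrow> 'n \<Rightarrow> real) \<Rightarrow> ('n \<Rightarrow> real) \<Rightarrow> real" where
  "quad_form B y = (\<Sum>j\<in>UNIV. \<Sum>k\<in>UNIV. B j k * y j * y k)"

definition pos_semidef :: "('n::finite \<Rightarrow> 'n \<Rightarrow> real) \<Rightarrow> bool" where
  "pos_semidef B \<longleftrightarrow> (\<forall>j k. B j k = B k j) \<and> (\<forall>y. 0 \<le> quad_form B y)"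

definition pos_def :: "('n::finite \<Rightarrow> 'n \<Rightarrow> real) \<Rightarrow> bool" where
  "pos_def B \<longleftrightarrow> (\<forall>j k. B j k = B k j) \<and> (\<forall>y. y \<noteq> (\<lambda>_. 0) \<longrightarrow> 0 < quad_form B y)"

lemma nonneg_quadratic_imp_linear_coeff_zero:
  fixes a b :: real
  assumes "\<And>t. 0 \<le> a * t\<^sup>2 + b * t"
  shows "b = 0"
proof -
  have "0 \<le> a" using assms[of 1] assms[of "-1"] by simp
  then have "a + 1 \<noteq> 0" by simp
  then have "a * (- b / (a + 1))\<^sup>2 + b * (- b / (a + 1)) = - (b / (a + 1))\<^sup>2"
    by (simp add: divide_simps power2_eq_square) algebra
  then show ?thesis using assms[of "- b / (a + 1)"] \<open>0 \<le> a\<close> by simp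
qed

lemma quad_form_two_points:
  "quad_form B (\<lambda>j. a * of_bool (j = k) + b * of_bool (j = s))
     = a * a * B k k + a * b * (B k s + B s k) + b * b * B s s"
  unfolding quad_form_def
  by (simp add: ring_distribs sum.distrib sum_distrib_left[symmetric] mult.assoc[symmetric]
      of_bool_def if_distrib[of "\<lambda>x. _ * x"] if_distrib[of "\<lambda>x. x * _"] cong: if_cong)

lemma quad_form_unit_vector: "quad_form B (\<lambda>j. of_bool (j = k)) = B k k"
  using quad_form_two_points[of B 1 k 0 k] by simp

lemma quad_form_zero_vector: "quad_form B (\<lambda>_. 0) = 0"
  by (simp add: quad_form_def)

lemma quad_form_update_zero_row:
  assumes "\<And>k. B s k = 0" "\<And>k. B k s = 0"
  shows "quad_form B (y(s := c)) = quad_form B y"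
  unfolding quad_form_def using assms by (intro sum.cong refl) auto

lemma quad_form_minus_rank_one:
  "quad_form (\<lambda>j k. B j k - c * b j * b k) y = quad_form B y - c * (\<Sum>j\<in>UNIV. b j * y j)\<^sup>2"
proof -
  have "(\<Sum>j\<in>UNIV. b j * y j)\<^sup>2 = (\<Sum>j\<in>UNIV. \<Sum>k\<in>UNIV. b j * b k * y j * y k)"
    by (simp add: power2_eq_square sum_product mult_ac)
  then show ?thesis
    by (simp add: quad_form_def sum_distrib_left sum_subtractf[symmetric] algebra_simps)
qed

lemma quad_form_hadamard_rank_one_sum:
  "quad_form (\<lambda>j k. A j k * (\<Sum>v\<leftarrow>vs. v j * v k)) x = (\<Sum>v\<leftarrow>vs. quad_form A (\<lambda>j. x j * v j))"
  by (induction vs) (simp_all add: quad_form_def algebra_simps sum.distrib)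

lemma pos_def_imp_pos_semidef:
  assumes "pos_def B"
  shows "pos_semidef B"
proof -
  have "0 \<le> quad_form B y" for y
    using assms by (cases "y = (\<lambda>_. 0)") (simp_all add: pos_def_def quad_form_zero_vector less_imp_le)
  then show ?thesis using assms by (simp add: pos_def_def pos_semidef_def)
qed

lemma pos_semidef_diag_nonneg: "pos_semidef B \<Longrightarrow> 0 \<le> B k k"
  unfolding pos_semidef_def using quad_form_unit_vector[of B k] by metis

lemma pos_def_diag_pos: "pos_def B \<Longrightarrow> 0 < B k k"
  unfolding pos_def_def using quad_form_unit_vector[of B k]
  by (auto elim!: allE[of _ "\<lambda>j. of_bool (j = k)"] simp: fun_eq_iff)

lemma pos_semidef_diag_zero_imp_row_zero:
  assumes "pos_semidef B" "B s s = 0"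
  shows "B s k = 0"
proof -
  have "2 * B s k = 0"
  proof (rule nonneg_quadratic_imp_linear_coeff_zero)
    fix t
    have "0 \<le> quad_form B (\<lambda>j. t * of_bool (j = k) + 1 * of_bool (j = s))"
      using assms(1) by (simp add: pos_semidef_def)
    also have "quad_form B (\<lambda>j. t * of_bool (j = k) + 1 * of_bool (j = s))
        = B k k * t\<^sup>2 + 2 * B s k * t"
      using assms unfolding quad_form_two_points pos_semidef_def
      by (simp add: power2_eq_square algebra_simps)
    finally show "0 \<le> B k k * t\<^sup>2 + 2 * B s k * t" .
  qed
  then show ?thesis by simp
qed

lemma pos_semidef_schur_complement:
  assumes psd: "pos_semidef B" and pos: "0 < B s s"
  shows "pos_semidef (\<lambda>j k. B j k - inverse (B s s) * B s j * B s k)"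
    (is "pos_semidef ?C")
proof -
  have sym: "B j k = B k j" for j k using psd by (simp add: pos_semidef_def)
  have "0 \<le> quad_form ?C y" for y
  proof -
    \<comment> \<open>Change the s-th coordinate so that y becomes orthogonal to row s; the form ?C does not see it.\<close>
    define y' where "y' = y(s := - (\<Sum>j\<in>UNIV - {s}. B s j * y j) / B s s)"
    have "(\<Sum>j\<in>UNIV. B s j * y' j) = B s s * y' s + (\<Sum>j\<in>UNIV - {s}. B s j * y j)"
      unfolding y'_def by (subst sum.remove[of UNIV s]) (auto intro!: sum.cong)
    also have "\<dots> = 0" using pos by (simp add: y'_def)
    finally have orth: "(\<Sum>j\<in>UNIV. B s j * y' j) = 0" .
    have "quad_form ?C y = quad_form ?C y'"
      unfolding y'_def using pos sym by (intro quad_form_update_zero_row[symmetric]) simp_all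
    also have "\<dots> = quad_form B y'"
      by (simp add: quad_form_minus_rank_one orth)
    finally show ?thesis using psd by (simp add: pos_semidef_def)
  qed
  then show ?thesis using sym by (simp add: pos_semidef_def mult_ac)
qed

lemma pos_semidef_rank_one_decomposition_on:
  assumes "finite S" "pos_semidef B" "\<And>j k. B j k \<noteq> 0 \<Longrightarrow> j \<in> S \<and> k \<in> S"
  shows "\<exists>vs. B = (\<lambda>j k. \<Sum>v\<leftarrow>vs. v j * v k)"
  using assms
proof (induction S arbitrary: B rule: finite_induct)
  case empty
  then have "B = (\<lambda>j k. \<Sum>v\<leftarrow>[]. v j * v k)" by auto
  then show ?case ..
next
  case (insert s S)
  have sym: "B j k = B k j" for j k using insert.prems(1) by (simp add: pos_semidef_def)
  consider "B s s = 0" | "0 < B s s"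
    using pos_semidef_diag_nonneg[OF insert.prems(1), of s] by linarith
  then show ?case
  proof cases
    case 1
    then have row: "B s k = 0" for k
      by (rule pos_semidef_diag_zero_imp_row_zero[OF insert.prems(1)])
    have col: "B k s = 0" for k using row[of k] sym[of k s] by simp
    have "B j k \<noteq> 0 \<Longrightarrow> j \<in> S \<and> k \<in> S" for j k
      using insert.prems(2)[of j k] row col by auto
    then show ?thesis using insert.IH insert.prems(1) by blast
  next
    case 2
    define C where "C = (\<lambda>j k. B j k - inverse (B s s) * B s j * B s k)"
    have C_row: "C s k = 0" and C_col: "C k s = 0" for k using 2 sym by (simp_all add: C_def)
    have "j \<in> S \<and> k \<in> S" if "C j k \<noteq> 0" for j k
    proof -
      have "j \<noteq> s" "k \<noteq> s" using that C_row C_col by auto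
      moreover have "B j k \<noteq> 0 \<or> B s j \<noteq> 0 \<and> B s k \<noteq> 0" using that by (auto simp: C_def)
      ultimately show ?thesis using insert.prems(2) by blast
    qed
    then obtain vs where vs: "C = (\<lambda>j k. \<Sum>v\<leftarrow>vs. v j * v k)"
      using insert.IH pos_semidef_schur_complement[OF insert.prems(1) 2] unfolding C_def by blast
    have "sqrt (B s s) * sqrt (B s s) = B s s" using 2 by simp
    then have "B j k = B s j / sqrt (B s s) * (B s k / sqrt (B s s)) + C j k" for j k
      using 2 unfolding C_def by (simp add: field_simps)
    then have "B = (\<lambda>j k. B s j / sqrt (B s s) * (B s k / sqrt (B s s)) + C j k)"
      by (intro ext)
    also have "\<dots> = (\<lambda>j k. \<Sum>v\<leftarrow>(\<lambda>j. B s j / sqrt (B s s)) # vs. v j * v k)"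
      by (simp add: vs)
    finally show ?thesis ..
  qed
qed

lemma pos_semidef_rank_one_decomposition:
  "pos_semidef B \<Longrightarrow> \<exists>vs. B = (\<lambda>j k. \<Sum>v\<leftarrow>vs. v j * v k)"
  by (rule pos_semidef_rank_one_decomposition_on[of UNIV]) simp_all

lemma pos_semidef_hadamard:
  assumes "pos_semidef A" "pos_semidef B"
  shows "pos_semidef (\<lambda>j k. A j k * B j k)"
proof -
  obtain vs where vs: "B = (\<lambda>j k. \<Sum>v\<leftarrow>vs. v j * v k)"
    using pos_semidef_rank_one_decomposition[OF assms(2)] by blast
  have "0 \<le> quad_form A y" for y using assms(1) by (simp add: pos_semidef_def)
  then have "0 \<le> quad_form (\<lambda>j k. A j k * B j k) x" for x
    unfolding vs quad_form_hadamard_rank_one_sum by (intro sum_list_nonneg) auto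
  then show ?thesis using assms by (simp add: pos_semidef_def)
qed

lemma pos_def_hadamard:
  assumes "pos_def A" "pos_def B"
  shows "pos_def (\<lambda>j k. A j k * B j k)"
proof -
  obtain vs where vs: "B = (\<lambda>j k. \<Sum>v\<leftarrow>vs. v j * v k)"
    using pos_semidef_rank_one_decomposition[OF pos_def_imp_pos_semidef[OF assms(2)]] by blast
  have A_nonneg: "0 \<le> quad_form A y" for y
    using pos_def_imp_pos_semidef[OF assms(1)] by (simp add: pos_semidef_def)
  have "0 < quad_form (\<lambda>j k. A j k * B j k) x" if x: "x \<noteq> (\<lambda>_. 0)" for x
  proof -
    obtain j where "x j \<noteq> 0" using x by (auto simp: fun_eq_iff)
    have "\<exists>v\<in>set vs. v j \<noteq> 0"
    proof (rule ccontr)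
      assume "\<not> (\<exists>v\<in>set vs. v j \<noteq> 0)"
      then have "(\<Sum>v\<leftarrow>vs. v j * v j) = 0" by (induction vs) auto
      then have "B j j = 0" by (simp add: vs)
      then show False using pos_def_diag_pos[OF assms(2), of j] by simp
    qed
    then obtain v where v: "v \<in> set vs" "v j \<noteq> 0" by blast
    with \<open>x j \<noteq> 0\<close> have "(\<lambda>j. x j * v j) \<noteq> (\<lambda>_. 0)" by (auto simp: fun_eq_iff)
    then have "0 < quad_form A (\<lambda>j. x j * v j)" using assms(1) by (simp add: pos_def_def)
    also have "\<dots> \<le> (\<Sum>v\<leftarrow>vs. quad_form A (\<lambda>j. x j * v j))"
      using v(1) A_nonneg by (intro member_le_sum_list) auto
    finally show ?thesis by (simp add: vs quad_form_hadamard_rank_one_sum)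
  qed
  then show ?thesis using assms by (simp add: pos_def_def)
qed

lemma sym_tensor_combine:
  fixes A B :: "('n::finite, 'm::finite) tensor" and f :: "real \<Rightarrow> real \<Rightarrow> real"
  assumes "sym_tensor A" "sym_tensor B"
  shows "sym_tensor (\<chi> g. f (A $ g) (B $ g))"
  unfolding sym_tensor_def
proof (intro allI impI)
  fix \<sigma> :: "'m option \<Rightarrow> 'm option" and g :: "'n ^ 'm option"
  assume "\<sigma> permutes UNIV"
  then have "A $ g = A $ (\<chi> p. g $ \<sigma> p)" "B $ g = B $ (\<chi> p. g $ \<sigma> p)"
    using assms unfolding sym_tensor_def by blast+
  then show "(\<chi> g. f (A $ g) (B $ g)) $ g = (\<chi> g. f (A $ g) (B $ g)) $ (\<chi> p. g $ \<sigma> p)"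
    by simp
qed

lemma tensor_apply_add: "tensor_apply (A + B) x = tensor_apply A x + tensor_apply B x"
  unfolding tensor_apply_def by (simp add: vec_eq_iff algebra_simps sum.distrib)

lemma tensor_apply_scaleR: "tensor_apply (c *\<^sub>R A) x = c *\<^sub>R tensor_apply A x"
  unfolding tensor_apply_def by (simp add: vec_eq_iff sum_distrib_left mult.assoc)

lemma closed_SPSD: "closed (SPSD :: ('n::finite, 'm::finite) tensor set)"
proof -
  have "(SPSD :: ('n, 'm) tensor set) =
      (\<Inter>\<sigma>\<in>{\<sigma>. \<sigma> permutes UNIV}. \<Inter>g. {A. A $ g = A $ (\<chi> p. g $ \<sigma> p)}) \<inter>
      (\<Inter>x. \<Inter>i. {A. 0 \<le> tensor_apply A x $ i})"
    by (auto simp: SPSD_def sym_tensor_def)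
  also have "closed \<dots>"
    unfolding tensor_apply_def
    by (intro closed_Int closed_INT ballI allI closed_Collect_eq closed_Collect_le continuous_intros)
  finally show ?thesis .
qed

lemma convex_cone_SPSD: "convex_cone (SPSD :: ('n::finite, 'm::finite) tensor set)"
  unfolding convex_cone_iff
proof (intro conjI ballI allI impI)
  show "0 \<in> (SPSD :: ('n, 'm) tensor set)"
    by (simp add: SPSD_def sym_tensor_def tensor_apply_def)
next
  fix A B :: "('n, 'm) tensor"
  assume "A \<in> SPSD" "B \<in> SPSD"
  moreover have "A + B = (\<chi> g. A $ g + B $ g)" by (simp add: vec_eq_iff)
  ultimately have "sym_tensor (A + B)" by (simp add: SPSD_def sym_tensor_combine)
  with \<open>A \<in> SPSD\<close> \<open>B \<in> SPSD\<close> show "A + B \<in> SPSD"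
    by (simp add: SPSD_def tensor_apply_add)
next
  fix A :: "('n, 'm) tensor" and c :: real
  assume "A \<in> SPSD" "0 \<le> c"
  moreover have "c *\<^sub>R A = (\<chi> g. c * A $ g)" by (simp add: vec_eq_iff)
  ultimately have "sym_tensor (c *\<^sub>R A)"
    using sym_tensor_combine[of A A "\<lambda>a _. c * a"] by (simp add: SPSD_def)
  with \<open>A \<in> SPSD\<close> \<open>0 \<le> c\<close> show "c *\<^sub>R A \<in> SPSD"
    by (simp add: SPSD_def tensor_apply_scaleR)
qed

definition tensor_index :: "'n \<Rightarrow> 'n \<Rightarrow> 'n \<Rightarrow> 'n ^ 2 option" where
  "tensor_index i j k = (\<chi> p. case p of None \<Rightarrow> i | Some q \<Rightarrow> if q = 1 then j else k)"

definition tensor_slice :: "('n::finite, 2) tensor \<Rightarrow> 'n \<Rightarrow> 'n \<Rightarrow> 'n \<Rightarrow> real" where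
  "tensor_slice A i j k = A $ tensor_index i j k"

lemma tensor_index_nth [simp]:
  "tensor_index i j k $ None = i" "tensor_index i j k $ Some 1 = j" "tensor_index i j k $ Some 2 = k"
  by (simp_all add: tensor_index_def)

lemma tensor_index_eq_iff: "tensor_index i j k = tensor_index i' j' k' \<longleftrightarrow> i = i' \<and> j = j' \<and> k = k'"
  by (metis tensor_index_nth)

lemma tensor_index_nth_eq: "g = tensor_index (g $ None) (g $ Some 1) (g $ Some 2)"
proof -
  have "g $ p = tensor_index (g $ None) (g $ Some 1) (g $ Some 2) $ p" for p
  proof (cases p)
    case (Some q)
    then show ?thesis using exhaust_2[of q] by auto
  qed simp
  then show ?thesis unfolding vec_eq_iff by blast
qed

lemma tensor_apply_order3:
  fixes A :: "('n::finite, 2) tensor"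
  shows "tensor_apply A x $ i = quad_form (tensor_slice A i) (vec_nth x)"
proof -
  have fibre: "{g. g $ None = i} = (\<lambda>(j, k). tensor_index i j k) ` UNIV"
  proof (intro set_eqI iffI)
    fix g :: "'n ^ 2 option"
    assume "g \<in> {g. g $ None = i}"
    then have "g = (\<lambda>(j, k). tensor_index i j k) (g $ Some 1, g $ Some 2)"
      using tensor_index_nth_eq[of g] by simp
    then show "g \<in> (\<lambda>(j, k). tensor_index i j k) ` UNIV" by (rule image_eqI) simp
  qed auto
  have inj: "inj (\<lambda>(j, k). tensor_index i j k)"
    by (auto simp: inj_on_def tensor_index_eq_iff)
  have "tensor_apply A x $ i = (\<Sum>g\<in>{g. g $ None = i}. A $ g * (x $ (g $ Some 1) * x $ (g $ Some 2)))"
    by (simp add: tensor_apply_def UNIV_2)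
  also have "\<dots> = (\<Sum>(j, k)\<in>UNIV. A $ tensor_index i j k * (x $ j * x $ k))"
    unfolding fibre by (subst sum.reindex[OF inj]) (simp add: case_prod_beta)
  also have "\<dots> = quad_form (tensor_slice A i) (vec_nth x)"
    unfolding quad_form_def tensor_slice_def UNIV_Times_UNIV[symmetric] sum.cartesian_product[symmetric]
    by (simp add: mult.assoc)
  finally show ?thesis .
qed

lemma sym_tensor_slice:
  fixes A :: "('n::finite, 2) tensor"
  assumes "sym_tensor A"
  shows "tensor_slice A i j k = tensor_slice A i k j"
proof -
  let ?\<sigma> = "Transposition.transpose (Some (1::2)) (Some 2)"
  have "?\<sigma> permutes UNIV" by (rule permutes_swap_id) auto
  then have "A $ tensor_index i j k = A $ (\<chi> p. tensor_index i j k $ ?\<sigma> p)"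
    using assms unfolding sym_tensor_def by blast
  also have "(\<chi> p. tensor_index i j k $ ?\<sigma> p) = tensor_index i k j"
    by (subst tensor_index_nth_eq) (simp add: transpose_def)
  finally show ?thesis by (simp add: tensor_slice_def)
qed

lemma tensor_slice_hadamard:
  "tensor_slice (hadamard A B) i = (\<lambda>j k. tensor_slice A i j k * tensor_slice B i j k)"
  by (simp add: tensor_slice_def hadamard_def fun_eq_iff)

lemma SPSD_order3_iff:
  fixes A :: "('n::finite, 2) tensor"
  shows "A \<in> SPSD \<longleftrightarrow> sym_tensor A \<and> (\<forall>i. pos_semidef (tensor_slice A i))"
proof -
  have "(\<forall>x. 0 \<le> tensor_apply A x $ i) \<longleftrightarrow> (\<forall>y. 0 \<le> quad_form (tensor_slice A i) y)" for i
    by (metis tensor_apply_order3 vec_lambda_inverse UNIV_I)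
  then show ?thesis
    unfolding SPSD_def pos_semidef_def using sym_tensor_slice by blast
qed

lemma SPD_order3_iff:
  fixes A :: "('n::finite, 2) tensor"
  shows "A \<in> SPD \<longleftrightarrow> sym_tensor A \<and> (\<forall>i. pos_def (tensor_slice A i))"
proof -
  have "(\<forall>x. x \<noteq> 0 \<longrightarrow> 0 < tensor_apply A x $ i) \<longleftrightarrow>
      (\<forall>y. y \<noteq> (\<lambda>_. 0) \<longrightarrow> 0 < quad_form (tensor_slice A i) y)" for i
  proof -
    have "x \<noteq> 0 \<longleftrightarrow> vec_nth x \<noteq> (\<lambda>_. 0)" for x :: "real ^ 'n"
      by (auto simp: vec_eq_iff fun_eq_iff)
    then show ?thesis by (metis tensor_apply_order3 vec_lambda_inverse UNIV_I)
  qed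
  then show ?thesis
    unfolding SPD_def pos_def_def using sym_tensor_slice by blast
qed

lemma hadamard_SPSD:
  fixes A B :: "('n::finite, 2) tensor"
  assumes "A \<in> SPSD" "B \<in> SPSD"
  shows "hadamard A B \<in> SPSD"
  using assms unfolding SPSD_order3_iff tensor_slice_hadamard
  by (simp add: hadamard_def sym_tensor_combine pos_semidef_hadamard)

lemma hadamard_SPD:
  fixes A B :: "('n::finite, 2) tensor"
  assumes "A \<in> SPD" "B \<in> SPD"
  shows "hadamard A B \<in> SPD"
  using assms unfolding SPD_order3_iff tensor_slice_hadamard
  by (simp add: hadamard_def sym_tensor_combine pos_def_hadamard)

theorem theorem3p9:
  assumes "even CARD('m::finite)" and "CARD('m) \<ge> 2"
    and "CARD('n::finite) \<ge> 2"
  shows "closed (SPSD :: ('n, 'm) tensor set) \<and> convex_cone (SPSD :: ('n, 'm) tensor set)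
    \<and> (\<forall>A B :: ('n, 2) tensor. A \<in> SPSD \<longrightarrow> B \<in> SPSD \<longrightarrow> hadamard A B \<in> SPSD)
    \<and> (\<forall>A B :: ('n, 2) tensor. A \<in> SPD \<longrightarrow> B \<in> SPD \<longrightarrow> hadamard A B \<in> SPD)"
  using closed_SPSD convex_cone_SPSD hadamard_SPSD hadamard_SPD by blast

end
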